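(* Let $C_n$ be the cycle on $n\geq 3$ vertices. Then $\gamma_{gr}^{2}(C_n)=n-1$, $\gamma_{gr}^{L,2}(C_n)=n$, $\gamma_{gr}^{Z,2}(C_n)=n-1$, and $\gamma_{gr}^{t,2}(C_n)=n$.
   Context: For a vertex $v$, $N(v)$ is its open neighborhood and $N[v]=N(v)\cup\{v\}$. Let $k$ be a positive integer. A sequence $S=(v_1,\ldots,v_m)$ of distinct vertices is a $k$-sequence (resp. $k$-$L$-sequence, $k$-$Z$-sequence, $k$-$t$-sequence) if for each $i\in[m]$ there is a vertex $u_i$ with $u_i\in N[v_i]$ (resp. $N[v_i]$, $N(v_i)$, $N(v_i)$) such that the number of indices $j<i$ with $u_i\in N[v_j]$ (resp. $N(v_j)$, $N[v_j]$, $N(v_j)$) is less than $k$. The numbers $\gamma_{gr}^{k}(G)$, $\gamma_{gr}^{L,k}(G)$, $\gamma_{gr}^{Z,k}(G)$, $\gamma_{gr}^{t,k}(G)$ are the maximum lengths of such sequences, respectively. *)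

theory Defs
  imports Main
begin

definition nbh :: "'a set \<Rightarrow> ('a \<Rightarrow> 'a \<Rightarrow> bool) \<Rightarrow> 'a \<Rightarrow> 'a set" where
  "nbh V E v = {u \<in> V. E v u}"

definition cnbh :: "'a set \<Rightarrow> ('a \<Rightarrow> 'a \<Rightarrow> bool) \<Rightarrow> 'a \<Rightarrow> 'a set" where
  "cnbh V E v = insert v (nbh V E v)"

text \<open>Generic k-sequence: footprint choice A (where u_i is taken from, relative to v_i)
  and covering choice B (u_i is counted as covered by v_j when u_i \<in> B v_j).\<close>

definition gen_kseq :: "nat \<Rightarrow> 'a set \<Rightarrow> ('a \<Rightarrow> 'a set) \<Rightarrow> ('a \<Rightarrow> 'a set) \<Rightarrow> 'a list \<Rightarrow> bool" where
  "gen_kseq k V A B S \<longleftrightarrow> distinct S \<and> set S \<subseteq> V \<and>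
     (\<forall>i < length S. \<exists>u \<in> A (S ! i). card {j. j < i \<and> u \<in> B (S ! j)} < k)"

definition kseq :: "nat \<Rightarrow> 'a set \<Rightarrow> ('a \<Rightarrow> 'a \<Rightarrow> bool) \<Rightarrow> 'a list \<Rightarrow> bool" where
  "kseq k V E = gen_kseq k V (cnbh V E) (cnbh V E)"

definition kLseq :: "nat \<Rightarrow> 'a set \<Rightarrow> ('a \<Rightarrow> 'a \<Rightarrow> bool) \<Rightarrow> 'a list \<Rightarrow> bool" where
  "kLseq k V E = gen_kseq k V (cnbh V E) (nbh V E)"

definition kZseq :: "nat \<Rightarrow> 'a set \<Rightarrow> ('a \<Rightarrow> 'a \<Rightarrow> bool) \<Rightarrow> 'a list \<Rightarrow> bool" where
  "kZseq k V E = gen_kseq k V (nbh V E) (cnbh V E)"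

definition ktseq :: "nat \<Rightarrow> 'a set \<Rightarrow> ('a \<Rightarrow> 'a \<Rightarrow> bool) \<Rightarrow> 'a list \<Rightarrow> bool" where
  "ktseq k V E = gen_kseq k V (nbh V E) (nbh V E)"

text \<open>Maximum length of a sequence satisfying P (P only admits distinct lists over a
  finite vertex set, so the set of lengths is finite; it contains 0 via the empty list).\<close>

definition max_len :: "('a list \<Rightarrow> bool) \<Rightarrow> nat" where
  "max_len P = Max {length S | S. P S}"

definition gamma_gr :: "nat \<Rightarrow> 'a set \<Rightarrow> ('a \<Rightarrow> 'a \<Rightarrow> bool) \<Rightarrow> nat" where
  "gamma_gr k V E = max_len (kseq k V E)"

definition gamma_gr_L :: "nat \<Rightarrow> 'a set \<Rightarrow> ('a \<Rightarrow> 'a \<Rightarrow> bool) \<Rightarrow> nat" where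
  "gamma_gr_L k V E = max_len (kLseq k V E)"

definition gamma_gr_Z :: "nat \<Rightarrow> 'a set \<Rightarrow> ('a \<Rightarrow> 'a \<Rightarrow> bool) \<Rightarrow> nat" where
  "gamma_gr_Z k V E = max_len (kZseq k V E)"

definition gamma_gr_t :: "nat \<Rightarrow> 'a set \<Rightarrow> ('a \<Rightarrow> 'a \<Rightarrow> bool) \<Rightarrow> nat" where
  "gamma_gr_t k V E = max_len (ktseq k V E)"

definition cycle_V :: "nat \<Rightarrow> nat set" where
  "cycle_V n = {0..<n}"

definition cycle_E :: "nat \<Rightarrow> nat \<Rightarrow> nat \<Rightarrow> bool" where
  "cycle_E n i j \<longleftrightarrow> i < n \<and> j < n \<and> i \<noteq> j \<and> (j = (i + 1) mod n \<or> i = (j + 1) mod n)"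

end

theory Submission
  imports Defs
begin

text \<open>
  A sequence consists of distinct vertices, so it has length at most n. For the
  upper bound n - 1 in the closed-covering cases: in C_n every vertex u lies in
  exactly three closed neighbourhoods, so if a sequence used all n vertices, each
  footprint u \<in> N[v] of its last vertex v would already be covered by the two
  other members of N[u]. For the lower bounds, take 0, 1, ..., m - 1 with
  footprints u_i = i + 1 (mod n): among earlier vertices only i + 2 (mod n)
  can cover i + 1, except that for m = n the first vertex 0 covers the last
  footprint 0 through its closed neighbourhood; stopping at m = n - 1 avoids this.
\<close>

lemma max_len_eqI:
  assumes "P S\<^sub>0" and "length S\<^sub>0 = m" and "\<And>S. P S \<Longrightarrow> length S \<le> m"
  shows "max_len P = m"
proof -
  have "finite {length S | S. P S}"
    using assms(3) by (auto intro: finite_subset[of _ "{..m}"])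
  then show ?thesis
    unfolding max_len_def using assms by (auto intro: Max_eqI)
qed

lemma card_nth_prefix:
  assumes "distinct S" and "i \<le> length S"
  shows "card {j. j < i \<and> P (S ! j)} = card {x \<in> set (take i S). P x}"
proof -
  have "{x \<in> set (take i S). P x} = nth S ` {j. j < i \<and> P (S ! j)}"
    using assms(2) by (auto simp flip: nth_image)
  moreover have "inj_on (nth S) {j. j < i \<and> P (S ! j)}"
    using assms by (auto intro: inj_on_nth)
  ultimately show ?thesis
    by (simp add: card_image)
qed

lemma gen_kseq_length_le_card:
  assumes "finite V" and "gen_kseq k V A B S"
  shows "length S \<le> card V"
  using assms distinct_card card_mono unfolding gen_kseq_def by metis

lemma gen_kseq_length_less_card:
  assumes "finite V" "V \<noteq> {}" and S: "gen_kseq k V A B S"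
    and covered: "\<And>v u. v \<in> V \<Longrightarrow> u \<in> A v \<Longrightarrow> k < card {x \<in> V. u \<in> B x}"
  shows "length S < card V"
proof (rule ccontr)
  assume "\<not> length S < card V"
  with assms have "length S = card V"
    using gen_kseq_length_le_card by fastforce
  with S have "set S = V"
    unfolding gen_kseq_def by (metis assms(1) card_subset_eq distinct_card)
  with \<open>V \<noteq> {}\<close> obtain T v where T: "S = T @ [v]"
    by (metis empty_set rev_exhaust)
  with S \<open>set S = V\<close> have "v \<in> V" "set T = V - {v}" "distinct S"
    unfolding gen_kseq_def by auto
  from S T obtain u where "u \<in> A v" and few: "card {j. j < length T \<and> u \<in> B (S ! j)} < k"
    unfolding gen_kseq_def by (auto dest!: spec[of _ "length T"])
  have "card {j. j < length T \<and> u \<in> B (S ! j)} = card {x \<in> set T. u \<in> B x}"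
    using card_nth_prefix[OF \<open>distinct S\<close>, of "length T" "\<lambda>x. u \<in> B x"] T by simp
  also have "\<dots> = card ({x \<in> V. u \<in> B x} - {v})"
    using \<open>set T = V - {v}\<close> by (intro arg_cong[where f = card]) auto
  also have "\<dots> \<ge> card {x \<in> V. u \<in> B x} - 1"
    by (simp add: card_Diff_singleton_if assms(1))
  finally show False
    using few covered[OF \<open>v \<in> V\<close> \<open>u \<in> A v\<close>] by linarith
qed

lemma cnbh_covering_eq:
  assumes "\<And>x y. E x y \<Longrightarrow> E y x" and "u \<in> V"
  shows "{x \<in> V. u \<in> cnbh V E x} = cnbh V E u"
  using assms unfolding cnbh_def nbh_def by auto

lemma cycle_E_sym: "cycle_E n x y \<Longrightarrow> cycle_E n y x"
  unfolding cycle_E_def by auto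

lemma cycle_covering_cnbh:
  "u < n \<Longrightarrow> {x \<in> cycle_V n. u \<in> cnbh (cycle_V n) (cycle_E n) x} = cnbh (cycle_V n) (cycle_E n) u"
  by (rule cnbh_covering_eq) (simp_all add: cycle_E_sym cycle_V_def)

lemma mod_Suc_less: "u < n \<Longrightarrow> Suc u mod n = (if Suc u = n then 0 else Suc u)"
  by (simp add: mod_Suc)

lemma cycle_nbh:
  assumes "n \<ge> 3" "u < n"
  shows "nbh (cycle_V n) (cycle_E n) u = {Suc u mod n, (if u = 0 then n else u) - 1}"
  using assms unfolding nbh_def cycle_V_def cycle_E_def
  by (auto simp: mod_Suc split: if_splits)

lemma cycle_pred_succ: "i < n \<Longrightarrow> (if Suc i mod n = 0 then n else Suc i mod n) - 1 = i"
  by (auto simp: mod_Suc_less)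

lemma cycle_card_cnbh:
  assumes "n \<ge> 3" "u < n"
  shows "card (cnbh (cycle_V n) (cycle_E n) u) = 3"
  using assms by (simp add: cnbh_def cycle_nbh mod_Suc_less)

lemma cycle_gen_kseq_cnbh_length_less:
  assumes "n \<ge> 3" "k < 3" and A: "\<And>v. A v \<subseteq> cnbh (cycle_V n) (cycle_E n) v"
    and "gen_kseq k (cycle_V n) A (cnbh (cycle_V n) (cycle_E n)) S"
  shows "length S < n"
proof -
  have "k < card {x \<in> cycle_V n. u \<in> cnbh (cycle_V n) (cycle_E n) x}"
    if "v \<in> cycle_V n" "u \<in> A v" for v u
  proof -
    have "u < n"
      using that A unfolding cnbh_def nbh_def cycle_V_def by auto
    then show ?thesis
      using assms by (simp add: cycle_covering_cnbh cycle_card_cnbh)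
  qed
  then show ?thesis
    using gen_kseq_length_less_card[OF _ _ assms(4)] assms(1) by (simp add: cycle_V_def)
qed

lemma cycle_prefix_gen_kseq:
  assumes "n \<ge> 3" "m \<le> n"
    and A: "\<And>v. nbh (cycle_V n) (cycle_E n) v \<subseteq> A v"
    and B: "\<And>v. B v \<subseteq> cnbh (cycle_V n) (cycle_E n) v"
    and last_footprint: "m < n \<or> B = nbh (cycle_V n) (cycle_E n)"
  shows "gen_kseq 2 (cycle_V n) A B [0..<m]"
  unfolding gen_kseq_def
proof (intro conjI allI impI)
  show "distinct [0..<m]"
    by simp
  show "set [0..<m] \<subseteq> cycle_V n"
    using \<open>m \<le> n\<close> by (auto simp: cycle_V_def)
  fix i
  assume "i < length [0..<m]"
  then have "i < m" "i < n"
    using \<open>m \<le> n\<close> by auto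
  define u where "u = Suc i mod n"
  have "u < n"
    using \<open>i < n\<close> by (simp add: u_def)
  have "u \<in> A i"
    using A[of i] cycle_nbh[OF \<open>n \<ge> 3\<close> \<open>i < n\<close>] by (auto simp: u_def)
  have "{j. j < i \<and> u \<in> B ([0..<m] ! j)} \<subseteq> {Suc u mod n}"
  proof
    fix j
    assume "j \<in> {j. j < i \<and> u \<in> B ([0..<m] ! j)}"
    then have "j < i" and uj: "u \<in> B j"
      using \<open>i < m\<close> by auto
    then have "j \<in> {x \<in> cycle_V n. u \<in> cnbh (cycle_V n) (cycle_E n) x}"
      using B \<open>i < n\<close> by (auto simp: cycle_V_def)
    then have "j \<in> cnbh (cycle_V n) (cycle_E n) u"
      using cycle_covering_cnbh[OF \<open>u < n\<close>] by simp
    moreover have "j \<noteq> u"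
      using last_footprint
    proof
      assume "m < n"
      then show "j \<noteq> u"
        using \<open>j < i\<close> \<open>i < m\<close> by (simp add: u_def)
    next
      assume "B = nbh (cycle_V n) (cycle_E n)"
      then show "j \<noteq> u"
        using uj by (auto simp: nbh_def cycle_E_def)
    qed
    ultimately show "j \<in> {Suc u mod n}"
      using cycle_nbh[OF \<open>n \<ge> 3\<close> \<open>u < n\<close>] cycle_pred_succ[OF \<open>i < n\<close>] \<open>j < i\<close>
      by (auto simp: cnbh_def u_def)
  qed
  then have "card {j. j < i \<and> u \<in> B ([0..<m] ! j)} \<le> card {Suc u mod n}"
    by (rule card_mono[rotated]) simp
  then have "card {j. j < i \<and> u \<in> B ([0..<m] ! j)} < 2"
    by simp
  with \<open>u \<in> A i\<close> show "\<exists>u \<in> A ([0..<m] ! i). card {j. j < i \<and> u \<in> B ([0..<m] ! j)} < 2"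
    using \<open>i < m\<close> by auto
qed

theorem mainTheorem5:
  fixes n :: nat
  assumes "n \<ge> 3"
  shows "gamma_gr 2 (cycle_V n) (cycle_E n) = n - 1 \<and>
         gamma_gr_L 2 (cycle_V n) (cycle_E n) = n \<and>
         gamma_gr_Z 2 (cycle_V n) (cycle_E n) = n - 1 \<and>
         gamma_gr_t 2 (cycle_V n) (cycle_E n) = n"
proof -
  let ?V = "cycle_V n" and ?E = "cycle_E n"
  have nbh_sub_cnbh: "nbh ?V ?E v \<subseteq> cnbh ?V ?E v" for v
    unfolding cnbh_def by blast
  have length_le: "length S \<le> n" if "gen_kseq 2 ?V A B S" for A B S
    using gen_kseq_length_le_card[OF _ that] by (simp add: cycle_V_def)
  have length_less: "length S < n" if "gen_kseq 2 ?V A (cnbh ?V ?E) S" "\<And>v. A v \<subseteq> cnbh ?V ?E v"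
    for A S
    using cycle_gen_kseq_cnbh_length_less[OF assms _ that(2,1)] by simp
  have "gamma_gr 2 ?V ?E = n - 1"
    unfolding gamma_gr_def kseq_def
    by (rule max_len_eqI[where S\<^sub>0 = "[0..<n - 1]"], rule cycle_prefix_gen_kseq[OF assms])
      (use assms nbh_sub_cnbh length_less in fastforce)+
  moreover have "gamma_gr_L 2 ?V ?E = n"
    unfolding gamma_gr_L_def kLseq_def
    by (rule max_len_eqI[where S\<^sub>0 = "[0..<n]"], rule cycle_prefix_gen_kseq[OF assms])
      (use nbh_sub_cnbh length_le in auto)
  moreover have "gamma_gr_Z 2 ?V ?E = n - 1"
    unfolding gamma_gr_Z_def kZseq_def
    by (rule max_len_eqI[where S\<^sub>0 = "[0..<n - 1]"], rule cycle_prefix_gen_kseq[OF assms])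
      (use assms nbh_sub_cnbh length_less in fastforce)+
  moreover have "gamma_gr_t 2 ?V ?E = n"
    unfolding gamma_gr_t_def ktseq_def
    by (rule max_len_eqI[where S\<^sub>0 = "[0..<n]"], rule cycle_prefix_gen_kseq[OF assms])
      (use nbh_sub_cnbh length_le in auto)
  ultimately show ?thesis
    by blast
qed

end
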